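(* Let $Y_1,Y_2$ be nonzero ordinary differential operators (with coefficients in $\mathbb C(x)$), and set $X=Y_1Y_2$ and $\hat X=Y_2Y_1$. Then $X$ and $\hat X$ have the same true rank.
   Context: The rank of a set of ordinary differential operators is the greatest common divisor of the orders of its elements. The true rank of an ordinary differential operator is the rank of its centralizer in the ring of ordinary differential operators (here, those with coefficients in $\mathbb C(x)$). *)

theory Defs
  imports "HOL-Computational_Algebra.Computational_Algebra"
begin

type_synonym ratfun = "complex poly fract"

text \<open>The derivation d/dx on C(x), via the quotient rule on any representation p/q with q nonzero
  (well defined since the quotient rule respects equivalence of fractions).\<close>
definition rderiv :: "ratfun \<Rightarrow> ratfun" where
  "rderiv r = (case (SOME (p, q). q \<noteq> 0 \<and> r = Fract p q) of (p, q) \<Rightarrow>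
      Fract (pderiv p * q - p * pderiv q) (q * q))"

text \<open>An ordinary differential operator sum a_i D^i with a_i in C(x) is stored as the
  polynomial with coefficients a_i (only the additive structure of poly is used);
  its order is the degree.\<close>
type_synonym diffop = "ratfun poly"

definition dop_order :: "diffop \<Rightarrow> nat" where
  "dop_order L = degree L"

text \<open>Composition of operators: (a D^i)(b D^j) = sum_k (i choose k) a b^(k) D^(i+j-k).\<close>
definition dop_mult :: "diffop \<Rightarrow> diffop \<Rightarrow> diffop" where
  "dop_mult P Q = (\<Sum>i\<le>degree P. \<Sum>j\<le>degree Q. \<Sum>k\<le>i.
      monom (of_nat (i choose k) * coeff P i * (rderiv ^^ k) (coeff Q j)) (i + j - k))"

definition centralizer :: "diffop \<Rightarrow> diffop set" where
  "centralizer L = {M. dop_mult L M = dop_mult M L}"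

definition dop_rank :: "diffop set \<Rightarrow> nat" where
  "dop_rank S = Gcd (dop_order ` (S - {0}))"

definition true_rank :: "diffop \<Rightarrow> nat" where
  "true_rank L = dop_rank (centralizer L)"

end

theory Submission
  imports Defs
begin

text \<open>If \<open>M\<close> commutes with \<open>X = Y\<^sub>1 Y\<^sub>2\<close>, then \<open>Y\<^sub>2 M Y\<^sub>1\<close> commutes with
  \<open>X' = Y\<^sub>2 Y\<^sub>1\<close>, since \<open>X' Y\<^sub>2 M Y\<^sub>1 = Y\<^sub>2 X M Y\<^sub>1 = Y\<^sub>2 M X Y\<^sub>1 = Y\<^sub>2 M Y\<^sub>1 X'\<close>.
  Orders add under composition, so the true rank of \<open>X'\<close> divides \<open>ord M + ord X'\<close> and
  \<open>ord X'\<close>, hence \<open>ord M\<close>; thus it divides the true rank of \<open>X\<close>, and by symmetry the two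
  ranks are equal.

  Associativity of composition, which the coefficient formula does not make evident, comes from a
  faithful action: \<open>D\<close> acts on \<open>C(x)[y]\<close> as the derivation \<open>\<partial>\<^sub>x + \<partial>\<^sub>y\<close>, composition
  of operators becomes composition of maps by the Leibniz rule, and \<open>L \<noteq> 0\<close> acts nontrivially
  because \<open>L y\<^sup>n\<close>, \<open>n = ord L\<close>, has constant term \<open>n! lead_coeff L\<close>.\<close>

locale derivation =
  fixes d :: "'a::comm_ring_1 \<Rightarrow> 'a"
  assumes add: "d (x + y) = d x + d y"
    and mult: "d (x * y) = d x * y + x * d y"
begin

lemma zero [simp]: "d 0 = 0"
  using add[of 0 0] by simp

lemma one [simp]: "d 1 = 0"
  using mult[of 1 1] by simp

lemma of_nat [simp]: "d (of_nat n) = 0"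
  by (induction n) (simp_all add: add)

lemma sum: "d (sum f A) = (\<Sum>a\<in>A. d (f a))"
  by (induction A rule: infinite_finite_induct) (simp_all add: add)

lemma funpow_add: "(d ^^ n) (x + y) = (d ^^ n) x + (d ^^ n) y"
  by (induction n) (simp_all add: add)

lemma funpow_zero [simp]: "(d ^^ n) 0 = 0"
  by (induction n) simp_all

lemma funpow_sum: "(d ^^ n) (sum f A) = (\<Sum>a\<in>A. (d ^^ n) (f a))"
  by (induction A rule: infinite_finite_induct) (simp_all add: funpow_add)

lemma leibniz: "(d ^^ n) (x * y) = (\<Sum>i\<le>n. of_nat (n choose i) * (d ^^ i) x * (d ^^ (n - i)) y)"
proof (induction n)
  case 0
  show ?case by simp
next
  case (Suc n)
  define t where "t i = (d ^^ i) x * (d ^^ (Suc n - i)) y" for i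
  have "(d ^^ Suc n) (x * y) =
      (\<Sum>i\<le>n. of_nat (n choose i) * (d ^^ Suc i) x * (d ^^ (n - i)) y) +
      (\<Sum>i\<le>n. of_nat (n choose i) * (d ^^ i) x * (d ^^ Suc (n - i)) y)"
    by (simp add: Suc sum mult mult.assoc sum.distrib algebra_simps)
  also have "\<dots> =
      (\<Sum>i\<le>n. of_nat (n choose i) * t (Suc i)) + (\<Sum>i\<le>n. of_nat (n choose i) * t i)"
    by (simp add: t_def Suc_diff_le mult.assoc)
  also have "(\<Sum>i\<le>n. of_nat (n choose i) * t i) = (\<Sum>i\<le>Suc n. of_nat (n choose i) * t i)"
    by (simp add: binomial_eq_0)
  also have "\<dots> = t 0 + (\<Sum>i\<le>n. of_nat (n choose Suc i) * t (Suc i))"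
    by (simp only: sum.atMost_Suc_shift) simp
  also have "(\<Sum>i\<le>n. of_nat (n choose i) * t (Suc i)) +
      (t 0 + (\<Sum>i\<le>n. of_nat (n choose Suc i) * t (Suc i))) =
      (\<Sum>i\<le>Suc n. of_nat (Suc n choose i) * t i)"
    by (simp only: sum.atMost_Suc_shift) (simp add: sum.distrib algebra_simps)
  finally show ?case
    by (simp add: t_def mult.assoc)
qed

end

lemma rderiv_Fract:
  assumes q: "q \<noteq> 0"
  shows "rderiv (Fract p q) = Fract (pderiv p * q - p * pderiv q) (q * q)"
proof -
  let ?rep = "SOME (a, b). b \<noteq> 0 \<and> Fract p q = Fract a b"
  obtain p' q' where rep: "?rep = (p', q')"
    by (cases ?rep) auto
  have "\<exists>x. case x of (a, b) \<Rightarrow> b \<noteq> 0 \<and> Fract p q = Fract a b"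
    using q by auto
  from someI_ex[OF this] rep have q': "q' \<noteq> 0" and "Fract p q = Fract p' q'"
    by auto
  with q have cross: "p * q' = p' * q"
    by (simp add: eq_fract)
  hence cross_deriv: "pderiv p * q' + p * pderiv q' = pderiv p' * q + p' * pderiv q"
    by (metis pderiv_mult mult.commute add.commute)
  have "(pderiv p' * q' - p' * pderiv q') * (q * q) = q' * q * (pderiv p' * q) - pderiv q' * q * (p' * q)"
    by (simp add: algebra_simps)
  also have "\<dots> = q' * q * (pderiv p * q' + p * pderiv q' - p' * pderiv q) - pderiv q' * q * (p * q')"
    using cross cross_deriv by (simp add: algebra_simps)
  also have "\<dots> = q' * q' * (pderiv p * q) - q' * q * (p' * pderiv q)"
    by (simp add: algebra_simps)
  also have "\<dots> = (pderiv p * q - p * pderiv q) * (q' * q')"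
    using cross by (simp add: algebra_simps)
  finally show ?thesis
    unfolding rderiv_def using rep q q' by (simp add: eq_fract)
qed

interpretation rderiv: derivation rderiv
proof
  fix a b :: ratfun
  show "rderiv (a + b) = rderiv a + rderiv b" "rderiv (a * b) = rderiv a * b + a * rderiv b"
    by (cases a; cases b; simp add: rderiv_Fract eq_fract pderiv_add pderiv_mult algebra_simps)+
qed

(* ratfun has no char_0 instance, so of_nat_eq_0_iff does not apply. *)
lemma of_nat_ratfun_eq_0_iff: "(of_nat n :: ratfun) = 0 \<longleftrightarrow> n = 0"
  by (simp add: of_nat_fract Zero_fract_def eq_fract of_nat_poly)

definition total_deriv :: "ratfun poly \<Rightarrow> ratfun poly" where
  "total_deriv f = map_poly rderiv f + pderiv f"

lemma coeff_map_poly_rderiv: "coeff (map_poly rderiv f) n = rderiv (coeff f n)"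
  by (simp add: coeff_map_poly)

interpretation total_deriv: derivation total_deriv
proof
  fix f g :: "ratfun poly"
  have "map_poly rderiv (f + g) = map_poly rderiv f + map_poly rderiv g"
    by (rule poly_eqI) (simp add: coeff_map_poly_rderiv rderiv.add)
  thus "total_deriv (f + g) = total_deriv f + total_deriv g"
    by (simp add: total_deriv_def pderiv_add algebra_simps)
  have "map_poly rderiv (f * g) = map_poly rderiv f * g + f * map_poly rderiv g"
    by (rule poly_eqI)
      (simp add: coeff_map_poly_rderiv coeff_mult rderiv.sum rderiv.mult sum.distrib)
  thus "total_deriv (f * g) = total_deriv f * g + f * total_deriv g"
    by (simp add: total_deriv_def pderiv_mult algebra_simps)
qed

lemma funpow_total_deriv_const: "(total_deriv ^^ k) [:b:] = [:(rderiv ^^ k) b:]"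
proof (induction k)
  case (Suc k)
  have "total_deriv [:c:] = [:rderiv c:]" for c
    by (rule poly_eqI) (simp add: total_deriv_def coeff_map_poly_rderiv coeff_pCons split: nat.split)
  with Suc show ?case
    by simp
qed simp

lemma funpow_total_deriv_monom_1:
  "(total_deriv ^^ i) (monom 1 n) = monom (of_nat (\<Prod>j<i. n - j)) (n - i)"
proof (induction i)
  case (Suc i)
  have "total_deriv (monom (of_nat c) m) = monom (of_nat (c * m)) (m - 1)" for c m
    by (simp add: total_deriv_def pderiv_monom mult.commute map_poly_monom)
  with Suc show ?case
    by (simp add: mult.commute del: of_nat_prod)
qed simp

definition dop_apply :: "diffop \<Rightarrow> ratfun poly \<Rightarrow> ratfun poly" where
  "dop_apply L f = (\<Sum>i\<le>degree L. smult (coeff L i) ((total_deriv ^^ i) f))"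

lemma dop_apply_bound:
  "degree L \<le> N \<Longrightarrow> dop_apply L f = (\<Sum>i\<le>N. smult (coeff L i) ((total_deriv ^^ i) f))"
  unfolding dop_apply_def by (rule sum.mono_neutral_left) (auto simp: coeff_eq_0)

lemma dop_apply_diff: "dop_apply (P - Q) f = dop_apply P f - dop_apply Q f"
proof -
  define N where "N = max (degree P) (degree Q)"
  have "degree P \<le> N" "degree Q \<le> N" "degree (P - Q) \<le> N"
    unfolding N_def using degree_diff_le_max by auto
  thus ?thesis
    by (simp add: dop_apply_bound[of _ N] sum_subtractf smult_diff_left)
qed

lemma dop_apply_sum: "dop_apply (sum g A) f = (\<Sum>a\<in>A. dop_apply (g a) f)"
proof (induction A rule: infinite_finite_induct)
  case (insert a A)
  have "dop_apply (P + Q) f = dop_apply P f + dop_apply Q f" for P Q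
    using dop_apply_diff[of "P + Q" Q f] by simp
  with insert show ?case
    by simp
qed (simp_all add: dop_apply_def)

lemma dop_apply_monom: "dop_apply (monom c n) f = smult c ((total_deriv ^^ n) f)"
proof -
  have "dop_apply (monom c n) f = (\<Sum>i\<le>n. smult (coeff (monom c n) i) ((total_deriv ^^ i) f))"
    by (rule dop_apply_bound) (simp add: degree_monom_le)
  also have "\<dots> = (\<Sum>i\<le>n. if i = n then smult c ((total_deriv ^^ i) f) else 0)"
    by (rule sum.cong) (auto simp: coeff_monom)
  finally show ?thesis
    by simp
qed

lemma dop_apply_dop_mult: "dop_apply (dop_mult P Q) f = dop_apply P (dop_apply Q f)"
proof -
  have "dop_apply (dop_mult P Q) f = (\<Sum>i\<le>degree P. \<Sum>j\<le>degree Q. \<Sum>k\<le>i.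
      smult (of_nat (i choose k) * coeff P i * (rderiv ^^ k) (coeff Q j)) ((total_deriv ^^ (i + j - k)) f))"
    by (simp add: dop_mult_def dop_apply_sum dop_apply_monom)
  also have "\<dots> = (\<Sum>i\<le>degree P. \<Sum>j\<le>degree Q. \<Sum>k\<le>i. smult (coeff P i)
      (of_nat (i choose k) * (total_deriv ^^ k) [:coeff Q j:] *
        (total_deriv ^^ (i - k)) ((total_deriv ^^ j) f)))"
  proof (intro sum.cong refl)
    fix i j k :: nat
    assume "k \<in> {..i}"
    hence "i + j - k = (i - k) + j"
      by simp
    hence "(total_deriv ^^ (i + j - k)) f = (total_deriv ^^ (i - k)) ((total_deriv ^^ j) f)"
      by (simp add: funpow_add)
    thus "smult (of_nat (i choose k) * coeff P i * (rderiv ^^ k) (coeff Q j)) ((total_deriv ^^ (i + j - k)) f) =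
        smult (coeff P i) (of_nat (i choose k) * (total_deriv ^^ k) [:coeff Q j:] *
          (total_deriv ^^ (i - k)) ((total_deriv ^^ j) f))"
      by (simp add: funpow_total_deriv_const of_nat_poly mult_ac)
  qed
  also have "\<dots> = dop_apply P (dop_apply Q f)"
  proof -
    have smult_eq: "smult c p = [:c:] * p" for c and p :: "ratfun poly"
      by simp
    show ?thesis
      unfolding dop_apply_def smult_eq total_deriv.funpow_sum total_deriv.leibniz
      by (simp only: sum_distrib_left)
  qed
  finally show ?thesis .
qed

lemma coeff_0_dop_apply_monom_1: "coeff (dop_apply L (monom 1 n)) 0 = coeff L n * of_nat (fact n)"
proof -
  have "coeff (dop_apply L (monom 1 n)) 0 =
      (\<Sum>i\<le>max n (degree L). coeff L i * coeff (monom (of_nat (\<Prod>j<i. n - j)) (n - i)) 0)"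
    by (simp add: dop_apply_bound[of _ "max n (degree L)"] funpow_total_deriv_monom_1 coeff_sum)
  also have "\<dots> = (\<Sum>i\<le>max n (degree L). if i = n then coeff L n * of_nat (\<Prod>j<n. n - j) else 0)"
  proof (rule sum.cong)
    fix i
    show "coeff L i * coeff (monom (of_nat (\<Prod>j<i. n - j)) (n - i)) 0 =
        (if i = n then coeff L n * of_nat (\<Prod>j<n. n - j) else 0)"
    proof (cases "n < i")
      case True
      hence "(\<Prod>j<i. n - j) = 0"
        by (auto intro: bexI[of _ n])
      then show ?thesis
        using True by (simp only: of_nat_0 monom_0 coeff_0 mult_zero_right) simp
    qed (auto simp: coeff_monom simp del: of_nat_prod)
  qed simp
  finally show ?thesis
    by (simp add: fact_prod_rev atLeast0LessThan del: of_nat_prod)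
qed

lemma dop_apply_inject:
  assumes "\<And>f. dop_apply P f = dop_apply Q f"
  shows "P = Q"
proof (rule ccontr)
  assume "P \<noteq> Q"
  hence "lead_coeff (P - Q) \<noteq> 0"
    by (intro leading_coeff_neq_0) simp
  hence "lead_coeff (P - Q) * of_nat (fact (degree (P - Q))) \<noteq> 0"
    by (simp add: of_nat_ratfun_eq_0_iff del: coeff_diff)
  with assms show False
    by (metis coeff_0_dop_apply_monom_1 dop_apply_diff diff_self coeff_0)
qed

lemma dop_mult_assoc: "dop_mult (dop_mult P Q) R = dop_mult P (dop_mult Q R)"
  by (rule dop_apply_inject) (simp add: dop_apply_dop_mult)

lemma coeff_dop_mult: "coeff (dop_mult P Q) m = (\<Sum>i\<le>degree P. \<Sum>j\<le>degree Q. \<Sum>k\<le>i.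
    if i + j - k = m then of_nat (i choose k) * coeff P i * (rderiv ^^ k) (coeff Q j) else 0)"
  by (simp add: dop_mult_def coeff_sum coeff_monom)

lemma degree_dop_mult_le: "degree (dop_mult P Q) \<le> degree P + degree Q"
  by (rule degree_le) (auto simp: coeff_dop_mult intro!: sum.neutral)

lemma coeff_dop_mult_degree:
  "coeff (dop_mult P Q) (degree P + degree Q) = lead_coeff P * lead_coeff Q"
proof -
  have "coeff (dop_mult P Q) (degree P + degree Q) = (\<Sum>i\<le>degree P. \<Sum>j\<le>degree Q. \<Sum>k\<le>i.
      if k = 0 then if j = degree Q then if i = degree P then lead_coeff P * lead_coeff Q else 0 else 0
      else 0)"
    unfolding coeff_dop_mult by (intro sum.cong refl) auto
  also have "\<dots> = lead_coeff P * lead_coeff Q"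
    by simp
  finally show ?thesis .
qed

lemma degree_dop_mult:
  assumes "P \<noteq> 0" "Q \<noteq> 0"
  shows "degree (dop_mult P Q) = degree P + degree Q"
proof (rule antisym)
  show "degree (dop_mult P Q) \<le> degree P + degree Q"
    by (rule degree_dop_mult_le)
  show "degree P + degree Q \<le> degree (dop_mult P Q)"
    using assms by (intro le_degree) (simp add: coeff_dop_mult_degree)
qed

lemma dop_mult_nonzero: "P \<noteq> 0 \<Longrightarrow> Q \<noteq> 0 \<Longrightarrow> dop_mult P Q \<noteq> 0"
  by (metis coeff_0 coeff_dop_mult_degree leading_coeff_0_iff mult_eq_0_iff)

lemma dop_mult_mem_centralizer_swap:
  assumes "M \<in> centralizer (dop_mult Y1 Y2)"
  shows "dop_mult (dop_mult Y2 M) Y1 \<in> centralizer (dop_mult Y2 Y1)"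
proof -
  have "dop_mult Y1 (dop_mult Y2 (dop_mult M Z)) = dop_mult M (dop_mult Y1 (dop_mult Y2 Z))" for Z
  proof -
    have "dop_mult (dop_mult Y1 Y2) M = dop_mult M (dop_mult Y1 Y2)"
      using assms by (simp add: centralizer_def)
    thus ?thesis
      by (metis dop_mult_assoc)
  qed
  thus ?thesis
    unfolding centralizer_def by (simp add: dop_mult_assoc)
qed

lemma true_rank_dvd_swap:
  assumes "Y1 \<noteq> 0" "Y2 \<noteq> 0"
  shows "true_rank (dop_mult Y2 Y1) dvd true_rank (dop_mult Y1 Y2)"
proof -
  let ?X = "dop_mult Y1 Y2" and ?X' = "dop_mult Y2 Y1"
  let ?r = "true_rank ?X'"
  have rank_dvd: "?r dvd degree N" if "N \<in> centralizer ?X'" "N \<noteq> 0" for N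
    using that unfolding true_rank_def dop_rank_def dop_order_def by (simp add: Gcd_dvd)
  have "?r dvd degree ?X'"
    using assms by (intro rank_dvd dop_mult_nonzero) (simp_all add: centralizer_def)
  hence r_dvd_X: "?r dvd degree Y2 + degree Y1"
    using assms by (simp add: degree_dop_mult)
  have "?r dvd degree M" if "M \<in> centralizer ?X" "M \<noteq> 0" for M
  proof -
    have "?r dvd degree (dop_mult (dop_mult Y2 M) Y1)"
      using that assms
      by (intro rank_dvd dop_mult_mem_centralizer_swap dop_mult_nonzero) simp_all
    hence "?r dvd degree M + (degree Y2 + degree Y1)"
      using that assms by (simp add: degree_dop_mult dop_mult_nonzero ac_simps)
    with r_dvd_X show ?thesis
      by (simp add: dvd_add_left_iff)
  qed
  thus ?thesis
    unfolding true_rank_def [of ?X] dop_rank_def dop_order_def by (auto intro: Gcd_greatest)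
qed

theorem mainTheorem15:
  fixes Y1 Y2 :: diffop
  assumes "Y1 \<noteq> 0" and "Y2 \<noteq> 0"
  shows "true_rank (dop_mult Y1 Y2) = true_rank (dop_mult Y2 Y1)"
  using true_rank_dvd_swap[OF assms] true_rank_dvd_swap[OF assms(2,1)] by (rule dvd_antisym[rotated])

end
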